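(* Let $(K,d)$ be a compact metric space, let $\gamma=(\gamma_1,\dots,\gamma_n)$ be a system of proper contractions on $K$ such that $K=\bigcup_{i=1}^n\gamma_i(K)$, and let $\varphi:K\to K$ be continuous with $\varphi(\gamma_i(x))=x$ for all $x\in K$ and $i=1,\dots,n$. Assume that $\gamma$ satisfies the open set condition in $K$. Let $A=C(K)$ and let $X=C(K)$ be the Hilbert bimodule over $A$ described in the context, with left action $\phi$. Then for every $a\in J(X)^0$ there exist $m\ge 1$ and $\xi_1,\dots,\xi_m,\eta_1,\dots,\eta_m\in X$ such that \[\sum_{i=1}^m\theta_{\xi_i,\eta_i}=\phi(a).\]
   Context: A continuous map $g:K\to K$ is a proper contraction if there are constants $0<c_1\le c_2<1$ with $c_1d(x,y)\le d(g(x),g(y))\le c_2 d(x,y)$ for all $x,y\in K$. The system $\gamma$ satisfies the open set condition in $K$ if there is a non-empty open set $V\subset K$ with $\bigcup_{i=1}^n\gamma_i(V)\subset V$ and $\gamma_i(V)\cap\gamma_j(V)=\emptyset$ for $i\ne j$. Let $B_\gamma=\{y\in K: y=\gamma_i(x)=\gamma_j(x)\text{ for some }x\in K\text{ and some }i\neq j\}$. The $A$-$A$ bimodule structure on $X=C(K)$ is $(a\cdot\xi\cdot b)(x)=a(x)\xi(x)b(\varphi(x))$ for $a,b\in A$, $\xi\in X$, with $A$-valued inner product $\langle\xi,\eta\rangle_A(x)=\frac1n\sum_{i=1}^n\overline{\xi(\gamma_i(x))}\eta(\gamma_i(x))$; this makes $X$ a Hilbert bimodule (C$^*$-correspondence)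 over $A$. The left action $\phi:A\to\mathcal L(X)$ is $(\phi(a)\xi)(x)=a(x)\xi(x)$. For $\xi,\eta\in X$, $\theta_{\xi,\eta}$ is the operator $\zeta\mapsto\xi\cdot\langle\eta,\zeta\rangle_A$ on $X$. $J(X)^0$ is the set of $a\in A$ that vanish on $B_\gamma$ and whose support is a compact subset of $K\setminus B_\gamma$. *)

theory Defs
  imports "HOL-Analysis.Analysis"
begin

definition proper_contraction :: "'a::metric_space set \<Rightarrow> ('a \<Rightarrow> 'a) \<Rightarrow> bool" where
  "proper_contraction K g \<longleftrightarrow> g ` K \<subseteq> K \<and> continuous_on K g \<and>
     (\<exists>c1 c2::real. 0 < c1 \<and> c1 \<le> c2 \<and> c2 < 1 \<and>
        (\<forall>x\<in>K. \<forall>y\<in>K. c1 * dist x y \<le> dist (g x) (g y) \<and> dist (g x) (g y) \<le> c2 * dist x y))"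

definition open_set_condition :: "'a::metric_space set \<Rightarrow> nat \<Rightarrow> (nat \<Rightarrow> 'a \<Rightarrow> 'a) \<Rightarrow> bool" where
  "open_set_condition K n \<gamma> \<longleftrightarrow> (\<exists>V. V \<noteq> {} \<and> openin (top_of_set K) V \<and>
      (\<Union>i\<in>{1..n}. \<gamma> i ` V) \<subseteq> V \<and>
      (\<forall>i\<in>{1..n}. \<forall>j\<in>{1..n}. i \<noteq> j \<longrightarrow> \<gamma> i ` V \<inter> \<gamma> j ` V = {}))"

definition branch_set :: "'a set \<Rightarrow> nat \<Rightarrow> (nat \<Rightarrow> 'a \<Rightarrow> 'a) \<Rightarrow> 'a set" where
  "branch_set K n \<gamma> = {y\<in>K. \<exists>x\<in>K. \<exists>i\<in>{1..n}. \<exists>j\<in>{1..n}. i \<noteq> j \<and> y = \<gamma> i x \<and> y = \<gamma> j x}"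

definition inner_A :: "nat \<Rightarrow> (nat \<Rightarrow> 'a \<Rightarrow> 'a) \<Rightarrow> ('a \<Rightarrow> complex) \<Rightarrow> ('a \<Rightarrow> complex) \<Rightarrow> 'a \<Rightarrow> complex" where
  "inner_A n \<gamma> \<xi> \<eta> x = (1 / of_nat n) * (\<Sum>i=1..n. cnj (\<xi> (\<gamma> i x)) * \<eta> (\<gamma> i x))"

definition right_act :: "('a \<Rightarrow> 'a) \<Rightarrow> ('a \<Rightarrow> complex) \<Rightarrow> ('a \<Rightarrow> complex) \<Rightarrow> 'a \<Rightarrow> complex" where
  "right_act \<phi> \<xi> b x = \<xi> x * b (\<phi> x)"

definition theta :: "nat \<Rightarrow> (nat \<Rightarrow> 'a \<Rightarrow> 'a) \<Rightarrow> ('a \<Rightarrow> 'a) \<Rightarrow> ('a \<Rightarrow> complex) \<Rightarrow> ('a \<Rightarrow> complex)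
    \<Rightarrow> ('a \<Rightarrow> complex) \<Rightarrow> 'a \<Rightarrow> complex" where
  "theta n \<gamma> \<phi> \<xi> \<eta> \<zeta> = right_act \<phi> \<xi> (inner_A n \<gamma> \<eta> \<zeta>)"

definition left_act :: "('a \<Rightarrow> complex) \<Rightarrow> ('a \<Rightarrow> complex) \<Rightarrow> 'a \<Rightarrow> complex" where
  "left_act a \<xi> x = a x * \<xi> x"

definition J0 :: "'a::metric_space set \<Rightarrow> nat \<Rightarrow> (nat \<Rightarrow> 'a \<Rightarrow> 'a) \<Rightarrow> ('a \<Rightarrow> complex) set" where
  "J0 K n \<gamma> = {a. continuous_on K a \<and> (\<forall>y\<in>branch_set K n \<gamma>. a y = 0) \<and>
      compact (closure {x\<in>K. a x \<noteq> 0}) \<and>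
      closure {x\<in>K. a x \<noteq> 0} \<subseteq> K - branch_set K n \<gamma>}"

end

theory Submission
  imports Defs
begin

text \<open>
  Let S be the support of a. Since S is compact and misses the branch set, a compactness
  argument gives \<delta> > 0 such that for every x in S and every y, at most one of the points
  \<gamma>_i y lies in the ball of radius \<delta> around x. Cover S by finitely many balls
  B(t, \<delta>/2) with t in S, take a partition of unity \<rho>_t on S subordinate to them, and
  a bump \<psi>_t equal to 1 on B(t, \<delta>/2) and to 0 off B(t, \<delta>). If \<rho>_t x \<noteq> 0 and
  x = \<gamma>_k y, then y = \<phi> x and \<psi>_t selects the branch \<gamma>_k y among the \<gamma>_i y, so
  \<theta>(a \<rho>_t, n \<psi>_t) \<zeta> = a \<rho>_t \<zeta>; summing over t gives a \<zeta>.
\<close>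

lemma eventually_separated_by_max_dist:
  fixes g h :: "'b::topological_space \<Rightarrow> 'a::metric_space"
  assumes "compact S" "compact K" "continuous_on K g" "continuous_on K h"
    and "\<And>x y. x \<in> S \<Longrightarrow> y \<in> K \<Longrightarrow> g y = x \<Longrightarrow> h y \<noteq> x"
  shows "\<forall>\<^sub>F \<delta> in at_right 0. \<forall>x\<in>S. \<forall>y\<in>K. \<delta> \<le> max (dist (g y) x) (dist (h y) x)"
proof (cases "S \<times> K = {}")
  case True
  then show ?thesis by auto
next
  case False
  define G where "G = (\<lambda>(x, y). max (dist (g y) x) (dist (h y) x))"
  have "continuous_on (S \<times> K) G"
    unfolding G_def case_prod_unfold
    by (intro continuous_intros continuous_on_compose2[OF assms(3)]
        continuous_on_compose2[OF assms(4)]) auto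
  then obtain q where q: "q \<in> S \<times> K" and q_min: "\<forall>q'\<in>S \<times> K. G q \<le> G q'"
    using continuous_attains_inf[OF compact_Times[OF assms(1,2)] False] by blast
  have "G q > 0"
    using q assms(5)[of "fst q" "snd q"] by (auto simp: G_def case_prod_unfold less_max_iff_disj)
  then show ?thesis
    unfolding eventually_at_right_field using q_min by (force simp: G_def)
qed

lemma uniformly_separated_branches:
  fixes \<gamma> :: "'i \<Rightarrow> 'b::topological_space \<Rightarrow> 'a::metric_space"
  assumes "finite I" "compact S" "compact K" "\<And>i. i \<in> I \<Longrightarrow> continuous_on K (\<gamma> i)"
    and "\<And>x y i k. \<lbrakk>x \<in> S; y \<in> K; i \<in> I; k \<in> I; \<gamma> i y = x; \<gamma> k y = x\<rbrakk> \<Longrightarrow> i = k"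
  shows "\<exists>\<delta>>0. \<forall>x\<in>S. \<forall>y\<in>K. \<forall>i\<in>I. \<forall>k\<in>I.
           dist (\<gamma> i y) x < \<delta> \<longrightarrow> dist (\<gamma> k y) x < \<delta> \<longrightarrow> i = k"
proof -
  define P where "P \<delta> i k \<longleftrightarrow> (\<forall>x\<in>S. \<forall>y\<in>K. \<delta> \<le> max (dist (\<gamma> i y) x) (dist (\<gamma> k y) x))"
    for \<delta> :: real and i k
  have "\<forall>\<^sub>F \<delta> in at_right 0. P \<delta> i k" if "i \<in> I" "k \<in> I" "i \<noteq> k" for i k
    unfolding P_def using assms that by (intro eventually_separated_by_max_dist) blast+
  then have "\<forall>\<^sub>F \<delta> in at_right 0. \<forall>i\<in>I. \<forall>k\<in>I. i \<noteq> k \<longrightarrow> P \<delta> i k"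
    using assms(1) by (simp add: eventually_ball_finite_distrib)
  then have "\<forall>\<^sub>F \<delta> in at_right 0. 0 < \<delta> \<and> (\<forall>i\<in>I. \<forall>k\<in>I. i \<noteq> k \<longrightarrow> P \<delta> i k)"
    by (intro eventually_conj eventually_at_right_less)
  from eventually_happens'[OF trivial_limit_at_right_real this]
  obtain \<delta> where "0 < \<delta>" and \<delta>: "\<forall>i\<in>I. \<forall>k\<in>I. i \<noteq> k \<longrightarrow> P \<delta> i k"
    by blast
  have "\<forall>x\<in>S. \<forall>y\<in>K. \<forall>i\<in>I. \<forall>k\<in>I. dist (\<gamma> i y) x < \<delta> \<longrightarrow> dist (\<gamma> k y) x < \<delta> \<longrightarrow> i = k"
  proof (intro ballI impI)
    fix x y i k
    assume "x \<in> S" "y \<in> K" "i \<in> I" "k \<in> I" "dist (\<gamma> i y) x < \<delta>" "dist (\<gamma> k y) x < \<delta>"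
    then show "i = k"
      using \<delta> unfolding P_def by (meson max_less_iff_conj not_le)
  qed
  with \<open>0 < \<delta>\<close> show ?thesis
    by (intro exI[of _ \<delta>] conjI)
qed

lemma compact_ball_partition_of_unity:
  fixes S :: "'a::metric_space set"
  assumes "compact S" "r > 0"
  shows "\<exists>T (\<rho> :: 'a \<Rightarrow> 'a \<Rightarrow> real). finite T \<and> T \<subseteq> S \<and> (\<forall>t. continuous_on UNIV (\<rho> t)) \<and>
           (\<forall>t x. \<rho> t x \<noteq> 0 \<longrightarrow> dist x t < r) \<and> (\<forall>x\<in>S. (\<Sum>t\<in>T. \<rho> t x) = 1)"
proof -
  obtain T where "T \<subseteq> S" "finite T" and cover: "S \<subseteq> (\<Union>t\<in>T. ball t (r/2))"
    using compactE_image[OF assms(1), of S "\<lambda>t. ball t (r/2)"] assms(2) by force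
  define tent :: "'a \<Rightarrow> 'a \<Rightarrow> real" where "tent t x = max 0 (r - dist x t)" for t x
  define D where "D x = max (\<Sum>t\<in>T. tent t x) (r/2)" for x
  have D_pos: "D x > 0" for x
    using assms(2) by (simp add: D_def less_max_iff_disj)
  have D_eq: "D x = (\<Sum>t\<in>T. tent t x)" if x: "x \<in> S" for x
  proof -
    obtain t where "t \<in> T" "dist x t < r/2"
      using cover x by (force simp: dist_commute)
    then have "r/2 < tent t x" by (simp add: tent_def less_max_iff_disj)
    also have "\<dots> \<le> (\<Sum>t\<in>T. tent t x)"
      using \<open>t \<in> T\<close> \<open>finite T\<close> by (intro member_le_sum) (auto simp: tent_def)
    finally show ?thesis by (simp add: D_def)
  qed
  have "continuous_on UNIV (\<lambda>x. tent t x / D x)" for t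
    using D_pos unfolding tent_def D_def
    by (intro continuous_intros) (metis less_irrefl)
  moreover have "dist x t < r" if "tent t x / D x \<noteq> 0" for t x
    using that by (auto simp: tent_def)
  moreover have "(\<Sum>t\<in>T. tent t x / D x) = 1" if "x \<in> S" for x
    using D_eq[OF that] D_pos[of x] by (simp add: sum_divide_distrib[symmetric])
  ultimately show ?thesis
    using \<open>finite T\<close> \<open>T \<subseteq> S\<close> by (intro exI[of _ T] exI[of _ "\<lambda>t x. tent t x / D x"]) auto
qed

lemma theta_branch_selector:
  assumes "k \<in> {1..n}" "\<phi> (\<gamma> k y) = y"
    and "\<psi> (\<gamma> k y) = 1" "\<And>i. i \<in> {1..n} \<Longrightarrow> i \<noteq> k \<Longrightarrow> \<psi> (\<gamma> i y) = 0"
  shows "theta n \<gamma> \<phi> \<xi> (\<lambda>z. of_nat n * complex_of_real (\<psi> z)) \<zeta> (\<gamma> k y)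
    = \<xi> (\<gamma> k y) * \<zeta> (\<gamma> k y)"
proof -
  let ?\<eta> = "\<lambda>z. of_nat n * complex_of_real (\<psi> z)"
  have "(\<Sum>i=1..n. cnj (?\<eta> (\<gamma> i y)) * \<zeta> (\<gamma> i y))
      = cnj (?\<eta> (\<gamma> k y)) * \<zeta> (\<gamma> k y) + (\<Sum>i\<in>{1..n}-{k}. cnj (?\<eta> (\<gamma> i y)) * \<zeta> (\<gamma> i y))"
    using assms(1) by (intro sum.remove) auto
  also have "\<dots> = of_nat n * \<zeta> (\<gamma> k y)"
    using assms(3,4) by (simp add: sum.neutral)
  finally have "inner_A n \<gamma> ?\<eta> \<zeta> y = \<zeta> (\<gamma> k y)"
    using assms(1) by (simp add: inner_A_def)
  then show ?thesis
    using assms(2) by (simp add: theta_def right_act_def)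
qed

lemma finite_sum_theta_reindex_nat:
  assumes "finite T" "\<forall>t\<in>T. continuous_on K (\<xi> t) \<and> continuous_on K (\<eta> t)"
  shows "\<exists>m::nat\<ge>1. \<exists>\<xi>' \<eta>'. (\<forall>j\<in>{1..m}. continuous_on K (\<xi>' j) \<and> continuous_on K (\<eta>' j)) \<and>
    (\<forall>\<zeta> x. (\<Sum>j=1..m. theta n \<gamma> \<phi> (\<xi>' j) (\<eta>' j) \<zeta> x) = (\<Sum>t\<in>T. theta n \<gamma> \<phi> (\<xi> t) (\<eta> t) \<zeta> x))"
proof -
  obtain e where e: "bij_betw e {1..card T} T"
    using ex_bij_betw_nat_finite_1[OF assms(1)] by blast
  \<comment> \<open>The extra index card T + 1 carries a vanishing term, so that m \<ge> 1 even if T = {}.\<close>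
  define \<xi>' where "\<xi>' j = (if j \<le> card T then \<xi> (e j) else (\<lambda>_. 0))" for j
  define \<eta>' where "\<eta>' j = (if j \<le> card T then \<eta> (e j) else (\<lambda>_. 0))" for j
  have "(\<Sum>j=1..Suc (card T). theta n \<gamma> \<phi> (\<xi>' j) (\<eta>' j) \<zeta> x)
      = (\<Sum>t\<in>T. theta n \<gamma> \<phi> (\<xi> t) (\<eta> t) \<zeta> x)" for \<zeta> x
  proof -
    have "(\<Sum>j=1..Suc (card T). theta n \<gamma> \<phi> (\<xi>' j) (\<eta>' j) \<zeta> x)
        = (\<Sum>j=1..card T. theta n \<gamma> \<phi> (\<xi> (e j)) (\<eta> (e j)) \<zeta> x)"
      by (simp add: \<xi>'_def \<eta>'_def theta_def right_act_def)
    also have "\<dots> = (\<Sum>t\<in>T. theta n \<gamma> \<phi> (\<xi> t) (\<eta> t) \<zeta> x)"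
      using sum.reindex_bij_betw[OF e] .
    finally show ?thesis .
  qed
  moreover have "continuous_on K (\<xi>' j) \<and> continuous_on K (\<eta>' j)" if "j \<in> {1..Suc (card T)}" for j
    using that bij_betwE[OF e] assms(2) by (simp add: \<xi>'_def \<eta>'_def)
  ultimately show ?thesis
    by (intro exI[of _ "Suc (card T)"] conjI exI[of _ \<xi>'] exI[of _ \<eta>']) auto
qed

lemma theta_local_bump:
  assumes "K = (\<Union>i\<in>{1..n}. \<gamma> i ` K)" "\<forall>i\<in>{1..n}. \<forall>x\<in>K. \<phi> (\<gamma> i x) = x"
    and separated: "\<forall>y\<in>K. \<forall>i\<in>{1..n}. \<forall>k\<in>{1..n}.
      dist (\<gamma> i y) t < \<delta> \<longrightarrow> dist (\<gamma> k y) t < \<delta> \<longrightarrow> i = k"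
    and \<psi>_one: "\<And>z. dist z t < \<delta>/2 \<Longrightarrow> \<psi> z = 1"
    and \<psi>_zero: "\<And>z. \<delta> \<le> dist z t \<Longrightarrow> \<psi> z = 0"
    and "x \<in> K" "dist x t < \<delta>/2"
  shows "theta n \<gamma> \<phi> \<xi> (\<lambda>z. of_nat n * complex_of_real (\<psi> z)) \<zeta> x = \<xi> x * \<zeta> x"
proof -
  obtain k y where k: "k \<in> {1..n}" and "y \<in> K" and x: "x = \<gamma> k y"
    using assms(1) \<open>x \<in> K\<close> by blast
  have near_k: "dist (\<gamma> k y) t < \<delta>"
    using \<open>dist x t < \<delta>/2\<close> zero_le_dist[of x t] unfolding x by linarith
  have "\<psi> (\<gamma> i y) = 0" if "i \<in> {1..n}" "i \<noteq> k" for i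
  proof (rule \<psi>_zero, rule ccontr)
    assume "\<not> \<delta> \<le> dist (\<gamma> i y) t"
    then have "dist (\<gamma> i y) t < \<delta>" by simp
    with near_k have "i = k"
      using separated \<open>y \<in> K\<close> that(1) k by blast
    with that(2) show False ..
  qed
  moreover have "\<phi> (\<gamma> k y) = y"
    using assms(2) k \<open>y \<in> K\<close> by blast
  moreover have "\<psi> (\<gamma> k y) = 1"
    using \<psi>_one \<open>dist x t < \<delta>/2\<close> x by simp
  ultimately show ?thesis
    unfolding x by (intro theta_branch_selector k) blast+
qed

lemma J0_support_branches_separated:
  fixes K :: "'a::metric_space set"
  assumes "compact K" "\<forall>i\<in>{1..n}. continuous_on K (\<gamma> i)" "a \<in> J0 K n \<gamma>"
  shows "\<exists>\<delta>>0. \<forall>x\<in>closure {x\<in>K. a x \<noteq> 0}. \<forall>y\<in>K. \<forall>i\<in>{1..n}. \<forall>k\<in>{1..n}.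
      dist (\<gamma> i y) x < \<delta> \<longrightarrow> dist (\<gamma> k y) x < \<delta> \<longrightarrow> i = k"
proof (rule uniformly_separated_branches)
  define S where "S = closure {x\<in>K. a x \<noteq> 0}"
  have "compact S" and S_sub: "S \<subseteq> K - branch_set K n \<gamma>"
    using assms(3) by (simp_all add: J0_def S_def)
  then show "compact (closure {x\<in>K. a x \<noteq> 0})"
    by (simp add: S_def)
  show "continuous_on K (\<gamma> i)" if "i \<in> {1..n}" for i
    using that assms(2) by blast
  show "i = k"
    if "x \<in> closure {x\<in>K. a x \<noteq> 0}" "y \<in> K" "i \<in> {1..n}" "k \<in> {1..n}" "\<gamma> i y = x" "\<gamma> k y = x"
    for x y i k
  proof (rule ccontr)
    assume "i \<noteq> k"
    have "x \<in> K"
      using that(1) S_sub by (auto simp: S_def)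
    moreover have "\<exists>i\<in>{1..n}. \<exists>j\<in>{1..n}. i \<noteq> j \<and> x = \<gamma> i y \<and> x = \<gamma> j y"
      by (intro bexI[of _ i] bexI[of _ k]) (use that \<open>i \<noteq> k\<close> in auto)
    ultimately have "x \<in> branch_set K n \<gamma>"
      unfolding branch_set_def using \<open>y \<in> K\<close> by blast
    with that(1) S_sub show False by (auto simp: S_def)
  qed
qed (use assms(1) in auto)

lemma J0_left_act_eq_sum_theta:
  fixes K :: "'a::metric_space set"
  assumes "compact K" "\<forall>i\<in>{1..n}. continuous_on K (\<gamma> i)"
    and "K = (\<Union>i\<in>{1..n}. \<gamma> i ` K)" "\<forall>i\<in>{1..n}. \<forall>x\<in>K. \<phi> (\<gamma> i x) = x"
    and "a \<in> J0 K n \<gamma>"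
  shows "\<exists>T (\<xi> :: 'a \<Rightarrow> 'a \<Rightarrow> complex) \<eta>. finite T \<and> (\<forall>t. continuous_on K (\<xi> t) \<and> continuous_on K (\<eta> t)) \<and>
           (\<forall>\<zeta>. \<forall>x\<in>K. (\<Sum>t\<in>T. theta n \<gamma> \<phi> (\<xi> t) (\<eta> t) \<zeta> x) = left_act a \<zeta> x)"
proof -
  define S where "S = closure {x\<in>K. a x \<noteq> 0}"
  have a_cont: "continuous_on K a" and "compact S"
    using assms(5) by (simp_all add: J0_def S_def)
  have a_supp: "x \<in> S" if "x \<in> K" "a x \<noteq> 0" for x
    unfolding S_def by (rule closure_subset[THEN subsetD]) (use that in simp)
  from J0_support_branches_separated[OF assms(1,2,5), folded S_def]
  obtain \<delta> where "\<delta> > 0" and separated: "\<forall>x\<in>S. \<forall>y\<in>K. \<forall>i\<in>{1..n}. \<forall>k\<in>{1..n}.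
      dist (\<gamma> i y) x < \<delta> \<longrightarrow> dist (\<gamma> k y) x < \<delta> \<longrightarrow> i = k"
    by (elim exE conjE) (rule that)
  obtain T and \<rho> :: "'a \<Rightarrow> 'a \<Rightarrow> real" where "finite T" "T \<subseteq> S"
    and \<rho>_cont: "\<And>t. continuous_on UNIV (\<rho> t)" and \<rho>_supp: "\<And>t x. \<rho> t x \<noteq> 0 \<Longrightarrow> dist x t < \<delta>/2"
    and \<rho>_sum: "\<And>x. x \<in> S \<Longrightarrow> (\<Sum>t\<in>T. \<rho> t x) = 1"
    using compact_ball_partition_of_unity[OF \<open>compact S\<close> half_gt_zero[OF \<open>\<delta> > 0\<close>]] by blast
  define \<psi> :: "'a \<Rightarrow> 'a \<Rightarrow> real" where "\<psi> t z = min 1 (max 0 (2 - 2 * dist z t / \<delta>))" for t z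
  define \<xi> :: "'a \<Rightarrow> 'a \<Rightarrow> complex" where "\<xi> t z = a z * complex_of_real (\<rho> t z)" for t z
  define \<eta> :: "'a \<Rightarrow> 'a \<Rightarrow> complex" where "\<eta> t z = of_nat n * complex_of_real (\<psi> t z)" for t z
  have term_eq: "theta n \<gamma> \<phi> (\<xi> t) (\<eta> t) \<zeta> x = complex_of_real (\<rho> t x) * (a x * \<zeta> x)"
    if "t \<in> T" "x \<in> K" for t x \<zeta>
  proof (cases "\<rho> t x = 0")
    case True
    then show ?thesis by (simp add: theta_def right_act_def \<xi>_def)
  next
    case False
    have "theta n \<gamma> \<phi> (\<xi> t) (\<eta> t) \<zeta> x = \<xi> t x * \<zeta> x"
      unfolding \<eta>_def
    proof (rule theta_local_bump[OF assms(3,4)])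
      show "\<forall>y\<in>K. \<forall>i\<in>{1..n}. \<forall>k\<in>{1..n}. dist (\<gamma> i y) t < \<delta> \<longrightarrow> dist (\<gamma> k y) t < \<delta> \<longrightarrow> i = k"
        using separated \<open>t \<in> T\<close> \<open>T \<subseteq> S\<close> by blast
    qed (use \<open>\<delta> > 0\<close> \<rho>_supp[OF False] \<open>x \<in> K\<close> in \<open>auto simp: \<psi>_def field_simps\<close>)
    then show ?thesis
      by (simp add: \<xi>_def ac_simps)
  qed
  have "continuous_on K (\<xi> t)" for t
    unfolding \<xi>_def
    by (intro continuous_intros a_cont continuous_on_subset[OF \<rho>_cont]) simp
  moreover have "continuous_on K (\<eta> t)" for t
    unfolding \<eta>_def \<psi>_def by (intro continuous_intros) (use \<open>\<delta> > 0\<close> in auto)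
  moreover have "(\<Sum>t\<in>T. theta n \<gamma> \<phi> (\<xi> t) (\<eta> t) \<zeta> x) = left_act a \<zeta> x" if "x \<in> K" for \<zeta> x
  proof -
    have "(\<Sum>t\<in>T. theta n \<gamma> \<phi> (\<xi> t) (\<eta> t) \<zeta> x) = complex_of_real (\<Sum>t\<in>T. \<rho> t x) * (a x * \<zeta> x)"
      using term_eq[OF _ that] by (simp add: sum_distrib_right)
    then show ?thesis
      using a_supp[OF that] \<rho>_sum by (cases "a x = 0") (auto simp: left_act_def)
  qed
  ultimately show ?thesis
    using \<open>finite T\<close> by (intro exI[of _ T] exI[of _ \<xi>] exI[of _ \<eta>]) blast
qed

theorem lemma4p3:
  fixes K :: "'a::metric_space set" and n :: nat and \<gamma> :: "nat \<Rightarrow> 'a \<Rightarrow> 'a"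
    and \<phi> :: "'a \<Rightarrow> 'a" and a :: "'a \<Rightarrow> complex"
  assumes "compact K"
    and "\<forall>i\<in>{1..n}. proper_contraction K (\<gamma> i)"
    and "K = (\<Union>i\<in>{1..n}. \<gamma> i ` K)"
    and "continuous_on K \<phi>" and "\<phi> ` K \<subseteq> K"
    and "\<forall>i\<in>{1..n}. \<forall>x\<in>K. \<phi> (\<gamma> i x) = x"
    and "open_set_condition K n \<gamma>"
    and "a \<in> J0 K n \<gamma>"
  shows "\<exists>m::nat. m \<ge> 1 \<and> (\<exists>\<xi> \<eta> :: nat \<Rightarrow> 'a \<Rightarrow> complex.
           (\<forall>j\<in>{1..m}. continuous_on K (\<xi> j) \<and> continuous_on K (\<eta> j)) \<and>
           (\<forall>\<zeta>. continuous_on K \<zeta> \<longrightarrow>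
              (\<forall>x\<in>K. (\<Sum>j=1..m. theta n \<gamma> \<phi> (\<xi> j) (\<eta> j) \<zeta> x) = left_act a \<zeta> x)))"
proof -
  have "\<forall>i\<in>{1..n}. continuous_on K (\<gamma> i)"
    using assms(2) unfolding proper_contraction_def by blast
  from J0_left_act_eq_sum_theta[OF assms(1) this assms(3) assms(6) assms(8)]
  obtain T and \<xi> \<eta> :: "'a \<Rightarrow> 'a \<Rightarrow> complex" where "finite T"
    and "\<forall>t. continuous_on K (\<xi> t) \<and> continuous_on K (\<eta> t)"
    and sum_eq: "\<forall>\<zeta>. \<forall>x\<in>K. (\<Sum>t\<in>T. theta n \<gamma> \<phi> (\<xi> t) (\<eta> t) \<zeta> x) = left_act a \<zeta> x"
    by (elim exE conjE) (rule that)
  then have "\<exists>m::nat\<ge>1. \<exists>\<xi>' \<eta>'. (\<forall>j\<in>{1..m}. continuous_on K (\<xi>' j) \<and> continuous_on K (\<eta>' j)) \<and>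
    (\<forall>\<zeta> x. (\<Sum>j=1..m. theta n \<gamma> \<phi> (\<xi>' j) (\<eta>' j) \<zeta> x) = (\<Sum>t\<in>T. theta n \<gamma> \<phi> (\<xi> t) (\<eta> t) \<zeta> x))"
    by (intro finite_sum_theta_reindex_nat) simp_all
  then obtain m :: nat and \<xi>' \<eta>' where "m \<ge> 1"
    and "\<forall>j\<in>{1..m}. continuous_on K (\<xi>' j) \<and> continuous_on K (\<eta>' j)"
    and reindex: "\<forall>\<zeta> x. (\<Sum>j=1..m. theta n \<gamma> \<phi> (\<xi>' j) (\<eta>' j) \<zeta> x) = (\<Sum>t\<in>T. theta n \<gamma> \<phi> (\<xi> t) (\<eta> t) \<zeta> x)"
    by (elim exE conjE) (rule that)
  then show ?thesis
    by (intro exI[of _ m] conjI exI[of _ \<xi>'] exI[of _ \<eta>']) (simp_all add: reindex sum_eq)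
qed

end
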